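(* Let $\mathcal F$ be a proper filter on $\omega$. The game $\mathfrak G(\mathcal F^+,[\omega]^{<\omega},\mathcal F^* )$ is dual to the game $\mathfrak G(\mathcal F,\omega,\mathcal F^+)$ (a player has a winning strategy in one iff the other player has one in the other). Consequently, in $\mathfrak G(\mathcal F^+,[\omega]^{<\omega},\mathcal F^* )$, player I has a winning strategy if and only if $\mathcal F$ is $\omega$-$+$-diagonalizable, and player II has a winning strategy if and only if $\mathcal F$ is not weakly Ramsey.
   Context: A filter on $\omega$ is a family $\mathcal F\subseteq\mathcal P(\omega)$ closed under finite intersections and supersets and containing all cofinite sets; it is proper if all its members are infinite. $\mathcal F^+=\{X:\omega\setminus X\notin\mathcal F\}$, $\mathcal F^*=\mathcal P(\omega)\setminus\mathcal F^+$. $X\subseteq^*Y$ means $X\setminus Y$ is finite. Game $\mathfrak G(\mathcal X,\omega,\mathcal Z)$: at each stage $k$, I chooses $X_k\in\mathcal X$ and II responds with $n_k\in X_k$; II wins if $\{n_k:k\in\omega\}\in\mathcal Z$. Game $\mathfrak G(\mathcal X,[\omega]^{<\omega},\mathcal Z)$: at each stage $k$, I chooses $X_k\in\mathcal X$ and II responds with a nonempty finite $s_k\subseteq X_k$; II wins if $\bigcup_k s_k\in\mathcal Z$. In each game I wins when II does not. A tree is a set $T$ of finite sequences of natural numbers containing the empty sequence and closed under initial segments; it is an $\mathcal F$-tree if for each $\bar s\in T$ there is $X_{\bar s}\in\mathcal F$ with $\bar s^\frown n\in T$ for all $n\in X_{\bar s}$; a branch (infinite sequence with all initial segments in $T$)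 is in $\mathcal F^+$ if its set of values is in $\mathcal F^+$. $\mathcal F$ is weakly Ramsey if every $\mathcal F$-tree has a branch in $\mathcal F^+$. $\mathcal F$ is $\omega$-$+$-diagonalizable if there are $X_n\in\mathcal F^+$ ($n\in\omega$) such that for every $Y\in\mathcal F$ there is $n$ with $X_n\subseteq^*Y$. *)

theory Defs
  imports Main
begin

definition is_filter :: "nat set set \<Rightarrow> bool" where
  "is_filter F \<longleftrightarrow>
     (\<forall>A B. A \<in> F \<and> B \<in> F \<longrightarrow> A \<inter> B \<in> F) \<and>
     (\<forall>A B. A \<in> F \<and> A \<subseteq> B \<longrightarrow> B \<in> F) \<and>
     (\<forall>A. finite (- A) \<longrightarrow> A \<in> F)"

definition proper_filter :: "nat set set \<Rightarrow> bool" where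
  "proper_filter F \<longleftrightarrow> is_filter F \<and> (\<forall>A\<in>F. infinite A)"

definition fplus :: "nat set set \<Rightarrow> nat set set" where
  "fplus F = {X. - X \<notin> F}"

definition fstar :: "nat set set \<Rightarrow> nat set set" where
  "fstar F = UNIV - fplus F"

text \<open>A generic infinite game: at stage k, I plays a move a_k in the set Xm,
  II answers with a move b_k satisfying R a_k b_k; II wins the play iff W b
  holds for the sequence b of II's moves.  A strategy for I maps the list of
  II's previous moves to I's next move; a strategy for II maps the list of I's
  moves so far (including the current one) to II's answer.\<close>

definition win_I :: "'a set \<Rightarrow> ('a \<Rightarrow> 'b \<Rightarrow> bool) \<Rightarrow> ((nat \<Rightarrow> 'b) \<Rightarrow> bool)
    \<Rightarrow> ('b list \<Rightarrow> 'a) \<Rightarrow> bool" where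
  "win_I Xm R W \<sigma> \<longleftrightarrow>
     (\<forall>h. (\<forall>k<length h. R (\<sigma> (take k h)) (h ! k)) \<longrightarrow> \<sigma> h \<in> Xm) \<and>
     (\<forall>b. (\<forall>k. R (\<sigma> (map b [0..<k])) (b k)) \<longrightarrow> \<not> W b)"

definition win_II :: "'a set \<Rightarrow> ('a \<Rightarrow> 'b \<Rightarrow> bool) \<Rightarrow> ((nat \<Rightarrow> 'b) \<Rightarrow> bool)
    \<Rightarrow> ('a list \<Rightarrow> 'b) \<Rightarrow> bool" where
  "win_II Xm R W \<tau> \<longleftrightarrow>
     (\<forall>h. h \<noteq> [] \<and> set h \<subseteq> Xm \<longrightarrow> R (last h) (\<tau> h)) \<and>
     (\<forall>a. (\<forall>k. a k \<in> Xm) \<longrightarrow> W (\<lambda>k. \<tau> (map a [0..<Suc k])))"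

text \<open>The game G(X, omega, Z): II answers with a natural number n_k in X_k.\<close>
definition I_wins_pt :: "nat set set \<Rightarrow> nat set set \<Rightarrow> bool" where
  "I_wins_pt X Z \<longleftrightarrow> (\<exists>\<sigma>. win_I X (\<lambda>A n. n \<in> A) (\<lambda>b. range b \<in> Z) \<sigma>)"

definition II_wins_pt :: "nat set set \<Rightarrow> nat set set \<Rightarrow> bool" where
  "II_wins_pt X Z \<longleftrightarrow> (\<exists>\<tau>. win_II X (\<lambda>A n. n \<in> A) (\<lambda>b. range b \<in> Z) \<tau>)"

text \<open>The game G(X, [omega]^<omega, Z): II answers with a nonempty finite subset of X_k.\<close>
definition I_wins_fin :: "nat set set \<Rightarrow> nat set set \<Rightarrow> bool" where
  "I_wins_fin X Z \<longleftrightarrow>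
     (\<exists>\<sigma>. win_I X (\<lambda>A s. s \<noteq> {} \<and> finite s \<and> s \<subseteq> A) (\<lambda>b. (\<Union>k. b k) \<in> Z) \<sigma>)"

definition II_wins_fin :: "nat set set \<Rightarrow> nat set set \<Rightarrow> bool" where
  "II_wins_fin X Z \<longleftrightarrow>
     (\<exists>\<tau>. win_II X (\<lambda>A s. s \<noteq> {} \<and> finite s \<and> s \<subseteq> A) (\<lambda>b. (\<Union>k. b k) \<in> Z) \<tau>)"

definition is_tree :: "nat list set \<Rightarrow> bool" where
  "is_tree T \<longleftrightarrow> [] \<in> T \<and> (\<forall>s\<in>T. \<forall>k. take k s \<in> T)"

definition F_tree :: "nat set set \<Rightarrow> nat list set \<Rightarrow> bool" where
  "F_tree F T \<longleftrightarrow> is_tree T \<and> (\<forall>s\<in>T. \<exists>X\<in>F. \<forall>n\<in>X. s @ [n] \<in> T)"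

definition branch :: "nat list set \<Rightarrow> (nat \<Rightarrow> nat) \<Rightarrow> bool" where
  "branch T b \<longleftrightarrow> (\<forall>k. map b [0..<k] \<in> T)"

definition weakly_Ramsey :: "nat set set \<Rightarrow> bool" where
  "weakly_Ramsey F \<longleftrightarrow>
     (\<forall>T. F_tree F T \<longrightarrow> (\<exists>b. branch T b \<and> range b \<in> fplus F))"

definition omega_plus_diagonalizable :: "nat set set \<Rightarrow> bool" where
  "omega_plus_diagonalizable F \<longleftrightarrow>
     (\<exists>X :: nat \<Rightarrow> nat set. (\<forall>n. X n \<in> fplus F) \<and>
        (\<forall>Y\<in>F. \<exists>n. finite (X n - Y)))"

end

theory Submission
  imports Defs "HOL-Library.Nat_Bijection"
begin

text \<open>II wants the union of its answers to be small, and F* is closed under subsets; so in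
  G(F+, [omega]^<omega, F*) II loses nothing by answering single points and I loses nothing by
  pretending that II did, and the game has the same winners as the point game G(F+, omega, F*).

  The families F and F+ are grills of each other: each consists of the sets meeting every member
  of the other.  This makes the point games G(F, omega, F+) and G(F+, omega, F*) dual.  A winning
  strategy for I in one game gives II a strategy in the other: answer inside the intersection of
  I's current move with the move the strategy prescribes.  A winning strategy for II in one game
  gives I a strategy in the other: play the set of all answers the strategy could give next, and
  read II's choice from it as the move of a simulated opponent.

  Finally, a winning strategy for I in G(F, omega, F+) is essentially an F-tree without branches
  in F+, and the countably many moves of a winning strategy for I in G(F+, omega, F*) diagonalize F.\<close>

definition replies :: "('b list \<Rightarrow> 'a \<Rightarrow> 'b) \<Rightarrow> 'a list \<Rightarrow> 'b list" where
  "replies g xs = foldl (\<lambda>l x. l @ [g l x]) [] xs"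

lemma replies_Nil [simp]: "replies g [] = []"
  by (simp add: replies_def)

lemma replies_snoc [simp]: "replies g (xs @ [x]) = replies g xs @ [g (replies g xs) x]"
  by (simp add: replies_def)

lemma replies_map_upt:
  "replies g (map a [0..<k]) = map (\<lambda>i. g (replies g (map a [0..<i])) (a i)) [0..<k]"
  by (induction k) auto

lemma replies_invariant:
  assumes "P []" and "\<And>l x. P l \<Longrightarrow> x \<in> A \<Longrightarrow> P (l @ [g l x])" and "set xs \<subseteq> A"
  shows "P (replies g xs)"
  using assms(3) by (induction xs rule: rev_induct) (simp_all add: assms(1,2))

lemma dependent_choice_sequence:
  assumes "P []" and "\<And>l. P l \<Longrightarrow> \<exists>x. P (l @ [x])"
  shows "\<exists>b. \<forall>k. P (map b [0..<k])"
proof -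
  define g where "g l (u :: unit) = (SOME x. P (l @ [x]))" for l u
  have step: "P (l @ [g l u])" if "P l" for l u
    unfolding g_def using assms(2)[OF that] by (rule someI_ex)
  define b where "b i = g (replies g (map (\<lambda>_. ()) [0..<i])) ()" for i
  have "P (replies g (map (\<lambda>_. ()) [0..<k]))" for k
    by (rule replies_invariant[where A = UNIV]) (simp_all add: assms(1) step)
  moreover have "map b [0..<k] = replies g (map (\<lambda>_. ()) [0..<k])" for k
    unfolding b_def by (rule replies_map_upt[symmetric])
  ultimately show ?thesis by metis
qed

section \<open>Reducing the finite-set game to the point game\<close>

lemma win_I_transfer:
  assumes win: "win_I Xm R W \<sigma>"
    and legal: "\<And>a c. R' a c \<Longrightarrow> R a (f c)"
    and outcome: "\<And>c. (\<And>k. \<exists>a. R' a (c k)) \<Longrightarrow> W' c \<Longrightarrow> W (f \<circ> c)"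
  shows "win_I Xm R' W' (\<sigma> \<circ> map f)"
  unfolding win_I_def
proof (intro conjI allI impI)
  fix h assume "\<forall>k<length h. R' ((\<sigma> \<circ> map f) (take k h)) (h ! k)"
  then have "\<forall>k<length (map f h). R (\<sigma> (take k (map f h))) (map f h ! k)"
    by (simp add: legal take_map)
  then show "(\<sigma> \<circ> map f) h \<in> Xm"
    using win unfolding win_I_def by simp
next
  fix c assume c: "\<forall>k. R' ((\<sigma> \<circ> map f) (map c [0..<k])) (c k)"
  then have "\<forall>k. R (\<sigma> (map (f \<circ> c) [0..<k])) ((f \<circ> c) k)"
    by (simp add: legal)
  then have "\<not> W (f \<circ> c)"
    using win unfolding win_I_def by blast
  then show "\<not> W' c"
    using outcome c by blast
qed

lemma win_II_transfer:
  assumes win: "win_II Xm R W \<tau>"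
    and legal: "\<And>a c. R a c \<Longrightarrow> R' a (f c)"
    and outcome: "\<And>c. (\<And>k. \<exists>a. R a (c k)) \<Longrightarrow> W c \<Longrightarrow> W' (f \<circ> c)"
  shows "win_II Xm R' W' (f \<circ> \<tau>)"
  unfolding win_II_def
proof (intro conjI allI impI)
  fix h assume "h \<noteq> [] \<and> set h \<subseteq> Xm"
  then show "R' (last h) ((f \<circ> \<tau>) h)"
    using win legal unfolding win_II_def by simp
next
  fix a :: "nat \<Rightarrow> 'a" assume a: "\<forall>k. a k \<in> Xm"
  let ?c = "\<lambda>k. \<tau> (map a [0..<Suc k])"
  have "R (last (map a [0..<Suc k])) (?c k)" for k
    using win a unfolding win_II_def by (simp add: image_subset_iff del: upt_Suc)
  then have "R (a k) (?c k)" for k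
    by simp
  moreover have "W ?c"
    using win a unfolding win_II_def by blast
  ultimately have "W' (f \<circ> ?c)"
    using outcome[of ?c] by blast
  then show "W' (\<lambda>k. (f \<circ> \<tau>) (map a [0..<Suc k]))"
    by (simp add: comp_def)
qed

lemma range_Min_mem_if_Union_mem:
  assumes down: "\<And>A B. A \<in> \<Z> \<Longrightarrow> B \<subseteq> A \<Longrightarrow> B \<in> \<Z>"
    and "\<And>k. \<exists>A. c k \<noteq> {} \<and> finite (c k) \<and> c k \<subseteq> A" and "(\<Union>k. c k) \<in> \<Z>"
  shows "range (Min \<circ> c) \<in> \<Z>"
proof -
  have "range (Min \<circ> c) \<subseteq> (\<Union>k. c k)"
    using assms(2) by (auto intro: Min_in)
  with assms(3) show ?thesis
    by (rule down)
qed

lemma I_wins_fin_iff_pt: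
  assumes down: "\<And>A B. A \<in> \<Z> \<Longrightarrow> B \<subseteq> A \<Longrightarrow> B \<in> \<Z>"
  shows "I_wins_fin \<X> \<Z> \<longleftrightarrow> I_wins_pt \<X> \<Z>"
proof
  assume "I_wins_fin \<X> \<Z>"
  then obtain \<sigma> where "win_I \<X> (\<lambda>A s. s \<noteq> {} \<and> finite s \<and> s \<subseteq> A) (\<lambda>c. (\<Union>k. c k) \<in> \<Z>) \<sigma>"
    unfolding I_wins_fin_def by blast
  then have "win_I \<X> (\<lambda>A n. n \<in> A) (\<lambda>b. range b \<in> \<Z>) (\<sigma> \<circ> map (\<lambda>n. {n}))"
    by (rule win_I_transfer) (simp_all add: UNION_singleton_eq_range)
  then show "I_wins_pt \<X> \<Z>"
    unfolding I_wins_pt_def by blast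
next
  assume "I_wins_pt \<X> \<Z>"
  then obtain \<sigma> where "win_I \<X> (\<lambda>A n. n \<in> A) (\<lambda>b. range b \<in> \<Z>) \<sigma>"
    unfolding I_wins_pt_def by blast
  then have "win_I \<X> (\<lambda>A s. s \<noteq> {} \<and> finite s \<and> s \<subseteq> A) (\<lambda>c. (\<Union>k. c k) \<in> \<Z>) (\<sigma> \<circ> map Min)"
  proof (rule win_I_transfer)
    show "range (Min \<circ> c) \<in> \<Z>"
      if "\<And>k. \<exists>A. c k \<noteq> {} \<and> finite (c k) \<and> c k \<subseteq> A" and "(\<Union>k. c k) \<in> \<Z>" for c
      by (rule range_Min_mem_if_Union_mem[OF down that])
  qed (auto intro: Min_in)
  then show "I_wins_fin \<X> \<Z>"
    unfolding I_wins_fin_def by blast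
qed

lemma II_wins_fin_iff_pt:
  assumes down: "\<And>A B. A \<in> \<Z> \<Longrightarrow> B \<subseteq> A \<Longrightarrow> B \<in> \<Z>"
  shows "II_wins_fin \<X> \<Z> \<longleftrightarrow> II_wins_pt \<X> \<Z>"
proof
  assume "II_wins_fin \<X> \<Z>"
  then obtain \<tau> where "win_II \<X> (\<lambda>A s. s \<noteq> {} \<and> finite s \<and> s \<subseteq> A) (\<lambda>c. (\<Union>k. c k) \<in> \<Z>) \<tau>"
    unfolding II_wins_fin_def by blast
  then have "win_II \<X> (\<lambda>A n. n \<in> A) (\<lambda>b. range b \<in> \<Z>) (Min \<circ> \<tau>)"
  proof (rule win_II_transfer)
    show "range (Min \<circ> c) \<in> \<Z>"
      if "\<And>k. \<exists>A. c k \<noteq> {} \<and> finite (c k) \<and> c k \<subseteq> A" and "(\<Union>k. c k) \<in> \<Z>" for c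
      by (rule range_Min_mem_if_Union_mem[OF down that])
  qed (auto intro: Min_in)
  then show "II_wins_pt \<X> \<Z>"
    unfolding II_wins_pt_def by blast
next
  assume "II_wins_pt \<X> \<Z>"
  then obtain \<tau> where "win_II \<X> (\<lambda>A n. n \<in> A) (\<lambda>b. range b \<in> \<Z>) \<tau>"
    unfolding II_wins_pt_def by blast
  then have "win_II \<X> (\<lambda>A s. s \<noteq> {} \<and> finite s \<and> s \<subseteq> A) (\<lambda>c. (\<Union>k. c k) \<in> \<Z>)
      ((\<lambda>n. {n}) \<circ> \<tau>)"
    by (rule win_II_transfer) (simp_all add: UNION_singleton_eq_range)
  then show "II_wins_fin \<X> \<Z>"
    unfolding II_wins_fin_def by blast
qed

section \<open>Duality of point games\<close>

definition grill :: "'a set set \<Rightarrow> 'a set set" where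
  "grill \<A> = {B. \<forall>A\<in>\<A>. A \<inter> B \<noteq> {}}"

definition consistent :: "(nat list \<Rightarrow> nat set) \<Rightarrow> nat list \<Rightarrow> bool" where
  "consistent \<sigma> l \<longleftrightarrow> (\<forall>k<length l. l ! k \<in> \<sigma> (take k l))"

lemma consistent_Nil [simp]: "consistent \<sigma> []"
  by (simp add: consistent_def)

lemma consistent_snoc [simp]: "consistent \<sigma> (l @ [x]) \<longleftrightarrow> consistent \<sigma> l \<and> x \<in> \<sigma> l"
  by (auto simp: consistent_def nth_append less_Suc_eq)

lemma consistent_take: "consistent \<sigma> l \<Longrightarrow> consistent \<sigma> (take j l)"
  by (simp add: consistent_def)

lemma consistent_map_upt_iff:
  "(\<forall>k. consistent \<sigma> (map b [0..<k])) \<longleftrightarrow> (\<forall>k. b k \<in> \<sigma> (map b [0..<k]))"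
proof
  assume "\<forall>k. consistent \<sigma> (map b [0..<k])"
  then have "consistent \<sigma> (map b [0..<Suc k])" for k
    by blast
  then show "\<forall>k. b k \<in> \<sigma> (map b [0..<k])"
    by simp
next
  assume b: "\<forall>k. b k \<in> \<sigma> (map b [0..<k])"
  show "\<forall>k. consistent \<sigma> (map b [0..<k])"
  proof
    fix k show "consistent \<sigma> (map b [0..<k])"
      by (induction k) (simp_all add: b)
  qed
qed

lemma I_wins_pt_iff:
  "I_wins_pt \<X> \<Z> \<longleftrightarrow> (\<exists>\<sigma>. (\<forall>l. consistent \<sigma> l \<longrightarrow> \<sigma> l \<in> \<X>)
      \<and> (\<forall>b. (\<forall>k. b k \<in> \<sigma> (map b [0..<k])) \<longrightarrow> range b \<notin> \<Z>))"
  by (simp add: I_wins_pt_def win_I_def consistent_def)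

lemma II_wins_pt_by_replies:
  fixes g :: "nat list \<Rightarrow> nat set \<Rightarrow> nat"
  assumes "P []" and step: "\<And>l X. P l \<Longrightarrow> X \<in> \<X> \<Longrightarrow> g l X \<in> X \<and> P (l @ [g l X])"
    and outcome: "\<And>b. \<forall>k. P (map b [0..<k]) \<Longrightarrow> range b \<in> \<Z>"
  shows "II_wins_pt \<X> \<Z>"
proof -
  have P_replies: "P (replies g h)" if "set h \<subseteq> \<X>" for h
    using replies_invariant[of P \<X> g h] \<open>P []\<close> step that by blast
  define \<tau> where "\<tau> h = last (replies g h)" for h
  have "\<tau> h \<in> last h" if "h \<noteq> []" "set h \<subseteq> \<X>" for h
  proof -
    have "set (butlast h) \<subseteq> \<X>" "last h \<in> \<X>"
      using that by (auto dest: in_set_butlastD)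
    then have "g (replies g (butlast h)) (last h) \<in> last h"
      using step P_replies by blast
    then show ?thesis
      unfolding \<tau>_def by (metis append_butlast_last_id last_snoc replies_snoc \<open>h \<noteq> []\<close>)
  qed
  moreover have "range (\<lambda>k. \<tau> (map a [0..<Suc k])) \<in> \<Z>" if "\<forall>k. a k \<in> \<X>" for a
  proof -
    define b where "b k = g (replies g (map a [0..<k])) (a k)" for k
    have "map b [0..<k] = replies g (map a [0..<k])" for k
      unfolding b_def by (rule replies_map_upt[symmetric])
    moreover have "set (map a [0..<k]) \<subseteq> \<X>" for k
      using that by auto
    ultimately have "range b \<in> \<Z>"
      using P_replies outcome by metis
    moreover have "\<tau> (map a [0..<Suc k]) = b k" for k
      by (simp add: \<tau>_def b_def del: upt_Suc) (simp add: map_upt_Suc)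
    ultimately show ?thesis by simp
  qed
  ultimately show ?thesis
    unfolding II_wins_pt_def win_II_def by blast
qed

lemma II_wins_pt_dual_if_I_wins_pt:
  assumes "\<Y> \<subseteq> grill \<X>" and "I_wins_pt \<X> \<Z>"
  shows "II_wins_pt \<Y> (- \<Z>)"
proof -
  obtain \<sigma> where legal: "\<And>l. consistent \<sigma> l \<Longrightarrow> \<sigma> l \<in> \<X>"
    and wins: "\<And>b. \<forall>k. b k \<in> \<sigma> (map b [0..<k]) \<Longrightarrow> range b \<notin> \<Z>"
    using assms(2) unfolding I_wins_pt_iff by blast
  define g where "g l Y = (SOME n. n \<in> \<sigma> l \<inter> Y)" for l Y
  show ?thesis
  proof (rule II_wins_pt_by_replies[where P = "consistent \<sigma>" and g = g])
    fix l Y assume "consistent \<sigma> l" "Y \<in> \<Y>"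
    then have "\<sigma> l \<inter> Y \<noteq> {}"
      using legal assms(1) unfolding grill_def by blast
    then have "g l Y \<in> \<sigma> l \<inter> Y"
      unfolding g_def by (metis some_in_eq)
    then show "g l Y \<in> Y \<and> consistent \<sigma> (l @ [g l Y])"
      using \<open>consistent \<sigma> l\<close> by simp
  next
    fix b assume "\<forall>k. consistent \<sigma> (map b [0..<k])"
    then show "range b \<in> - \<Z>"
      using wins consistent_map_upt_iff by blast
  qed simp
qed

lemma answers_mem_grill:
  assumes "\<And>h. h \<noteq> [] \<and> set h \<subseteq> \<X> \<Longrightarrow> \<tau> h \<in> last h" and "set Xs \<subseteq> \<X>"
  shows "(\<lambda>X. \<tau> (Xs @ [X])) ` \<X> \<in> grill \<X>"
proof -
  have "\<tau> (Xs @ [X]) \<in> X" if "X \<in> \<X>" for X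
    using assms(1)[of "Xs @ [X]"] assms(2) that by simp
  then show ?thesis
    unfolding grill_def by blast
qed

lemma I_wins_pt_dual_if_II_wins_pt:
  assumes "grill \<X> \<subseteq> \<Y>" and "II_wins_pt \<X> \<Z>"
  shows "I_wins_pt \<Y> (- \<Z>)"
proof -
  obtain \<tau> where legal: "\<And>h. h \<noteq> [] \<and> set h \<subseteq> \<X> \<Longrightarrow> \<tau> h \<in> last h"
    and wins: "\<And>a. \<forall>k. a k \<in> \<X> \<Longrightarrow> range (\<lambda>k. \<tau> (map a [0..<Suc k])) \<in> \<Z>"
    using assms(2) unfolding II_wins_pt_def win_II_def by blast
  define answers where "answers Xs = (\<lambda>X. \<tau> (Xs @ [X])) ` \<X>" for Xs
  have answers_in: "answers Xs \<in> \<Y>" if "set Xs \<subseteq> \<X>" for Xs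
    using answers_mem_grill[OF legal that] assms(1) unfolding answers_def by blast
  define g where "g Xs n = (SOME X. X \<in> \<X> \<and> \<tau> (Xs @ [X]) = n)" for Xs n
  have g: "g Xs n \<in> \<X> \<and> \<tau> (Xs @ [g Xs n]) = n" if "n \<in> answers Xs" for Xs n
  proof -
    from that obtain X where "X \<in> \<X> \<and> \<tau> (Xs @ [X]) = n"
      unfolding answers_def by blast
    then show ?thesis
      unfolding g_def by (rule someI)
  qed
  define \<sigma> where "\<sigma> l = answers (replies g l)" for l
  have simulated: "set (replies g l) \<subseteq> \<X>" if "consistent \<sigma> l" for l
    using that
  proof (induction l rule: rev_induct)
    case (snoc n l)
    then have "set (replies g l) \<subseteq> \<X>" and "n \<in> answers (replies g l)"
      by (simp_all add: \<sigma>_def)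
    then show ?case
      using g by simp
  qed simp
  have "\<sigma> l \<in> \<Y>" if "consistent \<sigma> l" for l
    unfolding \<sigma>_def using answers_in simulated that by blast
  moreover have "range b \<notin> - \<Z>" if "\<forall>k. b k \<in> \<sigma> (map b [0..<k])" for b
  proof -
    define a where "a k = g (replies g (map b [0..<k])) (b k)" for k
    have simulation: "replies g (map b [0..<k]) = map a [0..<k]" for k
      unfolding a_def by (rule replies_map_upt)
    have "b k \<in> answers (map a [0..<k])" for k
      using that simulation unfolding \<sigma>_def by metis
    moreover have "a k = g (map a [0..<k]) (b k)" for k
      using a_def simulation by metis
    ultimately have "a k \<in> \<X> \<and> \<tau> (map a [0..<Suc k]) = b k" for k
      using g by simp
    then have "range b = range (\<lambda>k. \<tau> (map a [0..<Suc k]))" "\<forall>k. a k \<in> \<X>"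
      by auto
    then show ?thesis
      using wins by simp
  qed
  ultimately show ?thesis
    unfolding I_wins_pt_iff by blast
qed

lemma wins_pt_grill_duality:
  assumes "grill \<X> = \<Y>" and "grill \<Y> = \<X>"
  shows "I_wins_pt \<X> \<Z> \<longleftrightarrow> II_wins_pt \<Y> (- \<Z>)"
    and "II_wins_pt \<X> \<Z> \<longleftrightarrow> I_wins_pt \<Y> (- \<Z>)"
  using II_wins_pt_dual_if_I_wins_pt[of \<Y> \<X> \<Z>] I_wins_pt_dual_if_II_wins_pt[of \<Y> \<X> "- \<Z>"]
    I_wins_pt_dual_if_II_wins_pt[of \<X> \<Y> \<Z>] II_wins_pt_dual_if_I_wins_pt[of \<X> \<Y> "- \<Z>"]
    assms by auto

lemma mem_fstar_iff: "X \<in> fstar F \<longleftrightarrow> - X \<in> F"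
  by (simp add: fstar_def fplus_def)

lemma fstar_eq_Compl_fplus: "fstar F = - fplus F"
  by (auto simp: fstar_def)

lemma fstar_subset_closed:
  assumes "is_filter F" and "A \<in> fstar F" and "B \<subseteq> A"
  shows "B \<in> fstar F"
proof -
  have "- A \<subseteq> - B"
    using assms(3) by blast
  then show ?thesis
    using assms(1,2) unfolding mem_fstar_iff is_filter_def by blast
qed

lemma grill_filter:
  assumes "is_filter F"
  shows "grill F = fplus F"
proof (intro set_eqI iffI)
  fix X assume "X \<in> grill F"
  then show "X \<in> fplus F"
    unfolding grill_def fplus_def by blast
next
  fix X assume X: "X \<in> fplus F"
  have "A \<inter> X \<noteq> {}" if "A \<in> F" for A
  proof
    assume "A \<inter> X = {}"
    then have "A \<subseteq> - X"
      by blast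
    with \<open>A \<in> F\<close> have "- X \<in> F"
      using assms unfolding is_filter_def by blast
    with X show False
      unfolding fplus_def by simp
  qed
  then show "X \<in> grill F"
    unfolding grill_def by blast
qed

lemma grill_fplus:
  assumes "is_filter F"
  shows "grill (fplus F) = F"
proof (intro set_eqI iffI)
  fix X assume "X \<in> grill (fplus F)"
  then have "- X \<notin> fplus F"
    unfolding grill_def by blast
  then show "X \<in> F"
    unfolding fplus_def by simp
next
  fix X assume "X \<in> F"
  have "A \<inter> X \<noteq> {}" if "A \<in> fplus F" for A
  proof
    assume "A \<inter> X = {}"
    then have "X \<subseteq> - A"
      by blast
    with \<open>X \<in> F\<close> have "- A \<in> F"
      using assms unfolding is_filter_def by blast
    with \<open>A \<in> fplus F\<close> show False
      unfolding fplus_def by simp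
  qed
  then show "X \<in> grill (fplus F)"
    unfolding grill_def by blast
qed

lemma fplus_Diff_finite:
  assumes "is_filter F" and "X \<in> fplus F" and "finite A"
  shows "X - A \<in> fplus F"
proof -
  have "- A \<in> F"
    using assms(1,3) unfolding is_filter_def by simp
  moreover have "- (X - A) \<inter> - A \<subseteq> - X"
    by blast
  ultimately have "- (X - A) \<in> F \<Longrightarrow> - X \<in> F"
    using assms(1) unfolding is_filter_def by blast
  then show ?thesis
    using assms(2) unfolding fplus_def by blast
qed

section \<open>Diagonalizability and weak Ramseyness\<close>

lemma I_wins_pt_if_diagonalizable:
  assumes "is_filter F" and "omega_plus_diagonalizable F"
  shows "I_wins_pt (fplus F) (fstar F)"
proof -
  obtain X :: "nat \<Rightarrow> nat set"
    where X: "\<And>n. X n \<in> fplus F" and diag: "\<And>Y. Y \<in> F \<Longrightarrow> \<exists>n. finite (X n - Y)"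
    using assms(2) unfolding omega_plus_diagonalizable_def by blast
  \<comment> \<open>at stage prod_encode (n, m), II has to answer inside X n and above m\<close>
  define \<sigma> where "\<sigma> l = X (fst (prod_decode (length l))) - {..<length l}" for l :: "nat list"
  have "\<sigma> l \<in> fplus F" for l
    unfolding \<sigma>_def using fplus_Diff_finite[OF assms(1) X] by blast
  moreover have "range b \<notin> fstar F" if b: "\<forall>k. b k \<in> \<sigma> (map b [0..<k])" for b
  proof
    assume "range b \<in> fstar F"
    then have "- range b \<in> F"
      by (simp add: mem_fstar_iff)
    then obtain n where "finite (X n - - range b)"
      using diag by blast
    then obtain m where m: "\<And>x. x \<in> X n \<Longrightarrow> x \<in> range b \<Longrightarrow> x < m"
      unfolding finite_nat_set_iff_bounded by blast
    define k where "k = prod_encode (n, m)"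
    have "b k \<in> X (fst (prod_decode k)) - {..<k}"
      using b unfolding \<sigma>_def by simp
    then have "b k \<in> X n" "k \<le> b k"
      unfolding k_def by auto
    moreover have "m \<le> k"
      unfolding k_def by (rule le_prod_encode_2)
    ultimately show False
      using m[of "b k"] by simp
  qed
  ultimately show ?thesis
    unfolding I_wins_pt_iff by blast
qed

lemma diagonalizable_if_I_wins_pt:
  assumes "is_filter F" and "I_wins_pt (fplus F) (fstar F)"
  shows "omega_plus_diagonalizable F"
proof -
  obtain \<sigma> where legal: "\<And>l. consistent \<sigma> l \<Longrightarrow> \<sigma> l \<in> fplus F"
    and wins: "\<And>b. \<forall>k. b k \<in> \<sigma> (map b [0..<k]) \<Longrightarrow> range b \<notin> fstar F"
    using assms(2) unfolding I_wins_pt_iff by blast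
  define X where "X n = \<sigma> (if consistent \<sigma> (list_decode n) then list_decode n else [])" for n
  have "X n \<in> fplus F" for n
    unfolding X_def using legal by simp
  moreover have "\<exists>n. finite (X n - Y)" if "Y \<in> F" for Y
  proof -
    have "\<exists>l. consistent \<sigma> l \<and> \<sigma> l \<subseteq> Y"
    proof (rule ccontr)
      assume "\<nexists>l. consistent \<sigma> l \<and> \<sigma> l \<subseteq> Y"
      then have "\<exists>n. consistent \<sigma> (l @ [n]) \<and> set (l @ [n]) \<subseteq> - Y"
        if "consistent \<sigma> l \<and> set l \<subseteq> - Y" for l
        using that by auto
      then obtain b where b: "\<forall>k. consistent \<sigma> (map b [0..<k]) \<and> set (map b [0..<k]) \<subseteq> - Y"
        using dependent_choice_sequence[where P = "\<lambda>l. consistent \<sigma> l \<and> set l \<subseteq> - Y"] by auto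
      then have "range b \<notin> fstar F"
        using wins consistent_map_upt_iff by blast
      moreover have "Y \<subseteq> - range b"
        using b by (fastforce simp: image_subset_iff)
      ultimately show False
        using assms(1) \<open>Y \<in> F\<close> unfolding mem_fstar_iff is_filter_def by blast
    qed
    then obtain l where "consistent \<sigma> l" "\<sigma> l \<subseteq> Y"
      by blast
    then have "X (list_encode l) - Y = {}"
      unfolding X_def by simp
    then show ?thesis
      by (metis finite.emptyI)
  qed
  ultimately show ?thesis
    unfolding omega_plus_diagonalizable_def by blast
qed

lemma not_weakly_Ramsey_if_I_wins_pt:
  assumes "I_wins_pt F (fplus F)"
  shows "\<not> weakly_Ramsey F"
proof
  obtain \<sigma> where legal: "\<And>l. consistent \<sigma> l \<Longrightarrow> \<sigma> l \<in> F"
    and wins: "\<And>b. \<forall>k. b k \<in> \<sigma> (map b [0..<k]) \<Longrightarrow> range b \<notin> fplus F"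
    using assms unfolding I_wins_pt_iff by blast
  define T where "T = {l. consistent \<sigma> l}"
  have "F_tree F T"
    unfolding F_tree_def is_tree_def T_def using legal consistent_take by auto
  moreover assume "weakly_Ramsey F"
  ultimately obtain b where "branch T b" "range b \<in> fplus F"
    unfolding weakly_Ramsey_def by blast
  then show False
    using wins consistent_map_upt_iff unfolding branch_def T_def by blast
qed

lemma I_wins_pt_if_not_weakly_Ramsey:
  assumes "\<not> weakly_Ramsey F"
  shows "I_wins_pt F (fplus F)"
proof -
  obtain T where T: "F_tree F T" and no_branch: "\<And>b. branch T b \<Longrightarrow> range b \<notin> fplus F"
    using assms unfolding weakly_Ramsey_def by blast
  have "[] \<in> T"
    using T unfolding F_tree_def is_tree_def by blast
  then have "F \<noteq> {}"
    using T unfolding F_tree_def by blast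
  then have "\<exists>X. X \<in> F \<and> (l \<in> T \<longrightarrow> (\<forall>n\<in>X. l @ [n] \<in> T))" for l
    using T unfolding F_tree_def by blast
  then obtain \<sigma> where \<sigma>: "\<And>l. \<sigma> l \<in> F \<and> (l \<in> T \<longrightarrow> (\<forall>n\<in>\<sigma> l. l @ [n] \<in> T))"
    by metis
  have "range b \<notin> fplus F" if b: "\<forall>k. b k \<in> \<sigma> (map b [0..<k])" for b
  proof -
    have "map b [0..<k] \<in> T" for k
      by (induction k) (use \<open>[] \<in> T\<close> \<sigma> b in auto)
    then show ?thesis
      using no_branch unfolding branch_def by blast
  qed
  then show ?thesis
    unfolding I_wins_pt_iff using \<sigma> by blast
qed

theorem theorem2p22:
  fixes F :: "nat set set"
  assumes "proper_filter F"
  shows "(I_wins_fin (fplus F) (fstar F) \<longleftrightarrow> II_wins_pt F (fplus F))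
       \<and> (II_wins_fin (fplus F) (fstar F) \<longleftrightarrow> I_wins_pt F (fplus F))
       \<and> (I_wins_fin (fplus F) (fstar F) \<longleftrightarrow> omega_plus_diagonalizable F)
       \<and> (II_wins_fin (fplus F) (fstar F) \<longleftrightarrow> \<not> weakly_Ramsey F)"
proof -
  have F: "is_filter F"
    using assms unfolding proper_filter_def by blast
  have I_fin: "I_wins_fin (fplus F) (fstar F) \<longleftrightarrow> I_wins_pt (fplus F) (fstar F)"
    and II_fin: "II_wins_fin (fplus F) (fstar F) \<longleftrightarrow> II_wins_pt (fplus F) (fstar F)"
    using I_wins_fin_iff_pt II_wins_fin_iff_pt fstar_subset_closed[OF F] by blast+
  have "I_wins_pt (fplus F) (fstar F) \<longleftrightarrow> II_wins_pt F (fplus F)"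
    and "II_wins_pt (fplus F) (fstar F) \<longleftrightarrow> I_wins_pt F (fplus F)"
    using wins_pt_grill_duality[OF grill_fplus[OF F] grill_filter[OF F], of "fstar F"]
    by (simp_all add: fstar_eq_Compl_fplus)
  with I_fin II_fin show ?thesis
    using I_wins_pt_if_diagonalizable[OF F] diagonalizable_if_I_wins_pt[OF F]
      not_weakly_Ramsey_if_I_wins_pt I_wins_pt_if_not_weakly_Ramsey by blast
qed

end
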